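(* Let $\mathcal{H}$ be a hypertree, $T$ a host tree of $\mathcal{H}$, and $B$ a basic set of $\mathcal{H}$. Let $\Gamma_{B,T}$ be the graph with vertex set $A(B)$ in which two distinct components $A_1,A_2\in A(B)$ are adjacent if and only if $T$ has an edge $e$ with $I_\mathcal{H}(e)=B$ having one endpoint in $A_1$ and the other in $A_2$. Then $\Gamma_{B,T}$ is a tree.
   Context: A hypergraph $\mathcal{H}$ has a finite vertex set $V(\mathcal{H})$ and a finite family of nonempty subsets (edges). A host tree is a tree on $V(\mathcal{H})$ in which every edge induces a connected subgraph; a hypertree is a hypergraph with a host tree. For $V'\subseteq V(\mathcal{H})$, $I_\mathcal{H}(V')$ is the intersection of all edges containing $V'$, or $V(\mathcal{H})$ if none does; for a tree edge $e=xy$, $I_\mathcal{H}(e)=I_\mathcal{H}(\{x,y\})$. For $A\subseteq V(\mathcal{H})$, $\overline{\mathcal{H}_A}$ is the hypergraph on $V(\mathcal{H})$ whose edges are the edges of $\mathcal{H}$ not containing $A$. The 2-section of a hypergraph is the graph on its vertices where two distinct vertices are adjacent iff some edge contains both. $A(B)$ is the set of connected components of the 2-section of $\overline{\mathcal{H}_B}$ containing at least one vertex of $B$. A union of sets is connected if the intersection graph of the sets is connected. $Comp(\mathcal{H})$ is the hypergraph without repeated edges on $V(\mathcal{H})$ whose edges are $V(\mathcal{H})$, all singletons, and all proper subsets obtainable from edges of $\mathcal{H}$ by repeated nonempty intersections and connected unions; a basic set is an edge of $Comp(\mathcal{H})$ with more than one vertex that is not a connected union of strictly smaller edges of $Comp(\mathcal{H})$.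 *)

theory Defs
  imports Main
begin

definition graph_rel :: "'v set set \<Rightarrow> ('v \<times> 'v) set" where
  "graph_rel F = {(x, y). x \<noteq> y \<and> {x, y} \<in> F}"

definition is_graph :: "'v set \<Rightarrow> 'v set set \<Rightarrow> bool" where
  "is_graph W F \<longleftrightarrow> (\<forall>f\<in>F. f \<subseteq> W \<and> card f = 2)"

definition connected_graph :: "'v set \<Rightarrow> 'v set set \<Rightarrow> bool" where
  "connected_graph W F \<longleftrightarrow> W \<noteq> {} \<and>
     (\<forall>x\<in>W. \<forall>y\<in>W. (x, y) \<in> (graph_rel {f\<in>F. f \<subseteq> W})\<^sup>*)"

definition is_tree :: "'v set \<Rightarrow> 'v set set \<Rightarrow> bool" where
  "is_tree W F \<longleftrightarrow> finite W \<and> is_graph W F \<and> connected_graph W F \<and>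
     (\<forall>f\<in>F. \<not> connected_graph W (F - {f}))"

definition hypergraph :: "'a set \<Rightarrow> 'a set set \<Rightarrow> bool" where
  "hypergraph V E \<longleftrightarrow> finite V \<and> finite E \<and> (\<forall>e\<in>E. e \<noteq> {} \<and> e \<subseteq> V)"

definition host_tree :: "'a set \<Rightarrow> 'a set set \<Rightarrow> 'a set set \<Rightarrow> bool" where
  "host_tree V E T \<longleftrightarrow> is_tree V T \<and> (\<forall>e\<in>E. connected_graph e {f\<in>T. f \<subseteq> e})"

definition hypertree :: "'a set \<Rightarrow> 'a set set \<Rightarrow> bool" where
  "hypertree V E \<longleftrightarrow> hypergraph V E \<and> (\<exists>T. host_tree V E T)"

definition I_H :: "'a set \<Rightarrow> 'a set set \<Rightarrow> 'a set \<Rightarrow> 'a set" where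
  "I_H V E V' = (if {e\<in>E. V' \<subseteq> e} = {} then V else \<Inter>{e\<in>E. V' \<subseteq> e})"

definition edges_not_containing :: "'a set set \<Rightarrow> 'a set \<Rightarrow> 'a set set" where
  "edges_not_containing E A = {e\<in>E. \<not> A \<subseteq> e}"

definition two_section_rel :: "'a set \<Rightarrow> 'a set set \<Rightarrow> ('a \<times> 'a) set" where
  "two_section_rel V E = {(x, y). x \<in> V \<and> y \<in> V \<and> x \<noteq> y \<and> (\<exists>e\<in>E. x \<in> e \<and> y \<in> e)}"

definition two_section_components :: "'a set \<Rightarrow> 'a set set \<Rightarrow> 'a set set" where
  "two_section_components V E = (\<lambda>x. {y\<in>V. (x, y) \<in> (two_section_rel V E)\<^sup>*}) ` V"

definition A_of :: "'a set \<Rightarrow> 'a set set \<Rightarrow> 'a set \<Rightarrow> 'a set set" where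
  "A_of V E B = {C \<in> two_section_components V (edges_not_containing E B). C \<inter> B \<noteq> {}}"

text \<open>Connected union: the intersection graph of the family is connected.\<close>
definition intersection_graph_edges :: "'a set set \<Rightarrow> 'a set set set" where
  "intersection_graph_edges S = {{X, Y} | X Y. X \<in> S \<and> Y \<in> S \<and> X \<noteq> Y \<and> X \<inter> Y \<noteq> {}}"

definition connected_family :: "'a set set \<Rightarrow> bool" where
  "connected_family S \<longleftrightarrow> finite S \<and> connected_graph S (intersection_graph_edges S)"

inductive_set comp_gen :: "'a set set \<Rightarrow> 'a set set" for E :: "'a set set" where
  base: "e \<in> E \<Longrightarrow> e \<in> comp_gen E"
| inter: "X \<in> comp_gen E \<Longrightarrow> Y \<in> comp_gen E \<Longrightarrow> X \<inter> Y \<noteq> {} \<Longrightarrow> X \<inter> Y \<in> comp_gen E"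
| union: "(\<And>X. X \<in> S \<Longrightarrow> X \<in> comp_gen E) \<Longrightarrow> connected_family S \<Longrightarrow> \<Union>S \<in> comp_gen E"

definition Comp_edges :: "'a set \<Rightarrow> 'a set set \<Rightarrow> 'a set set" where
  "Comp_edges V E = {V} \<union> {{v} | v. v \<in> V} \<union> {X \<in> comp_gen E. X \<subset> V}"

definition basic_set :: "'a set \<Rightarrow> 'a set set \<Rightarrow> 'a set \<Rightarrow> bool" where
  "basic_set V E B \<longleftrightarrow> B \<in> Comp_edges V E \<and> card B > 1 \<and>
     \<not> (\<exists>S. S \<subseteq> {Y \<in> Comp_edges V E. Y \<subset> B} \<and> connected_family S \<and> \<Union>S = B)"

definition Gamma_edges :: "'a set \<Rightarrow> 'a set set \<Rightarrow> 'a set \<Rightarrow> 'a set set \<Rightarrow> 'a set set set" where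
  "Gamma_edges V E B T = {{A1, A2} | A1 A2. A1 \<in> A_of V E B \<and> A2 \<in> A_of V E B \<and> A1 \<noteq> A2 \<and>
      (\<exists>x y. {x, y} \<in> T \<and> I_H V E {x, y} = B \<and> x \<in> A1 \<and> y \<in> A2)}"

end

theory Submission
  imports Defs
begin

text \<open>Every edge \<open>B\<close> of \<open>Comp(H)\<close> spans a subtree of the host tree \<open>T\<close> and is closed under
  \<open>I_H\<close> on tree edges: intersections of subtrees are subtrees, and for a connected union a tree edge
  lying in no member would be a bridge whose endpoints are still joined through the members.
  Now a tree edge \<open>e \<subseteq> B\<close> either lies in an edge not containing \<open>B\<close>, so its endpoints share a
  component of \<open>A(B)\<close>, or it lies only in edges containing \<open>B\<close>, so \<open>I_H(e) = B\<close> and it is an edge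
  of \<open>\<Gamma>\<close>; projecting the subtree on \<open>B\<close> therefore shows that \<open>\<Gamma>\<close> is connected. Conversely, a
  tree edge \<open>e\<close> with \<open>I_H(e) = B\<close> lies in no edge avoiding \<open>B\<close>, and every edge of \<open>H\<close> spans a
  subtree. Hence if \<open>\<Gamma>\<close> stayed connected after removing the edge coming from \<open>e\<close>, a walk in \<open>\<Gamma>\<close>
  would lift to a walk in \<open>T - e\<close> joining the endpoints of \<open>e\<close>, which is impossible in a tree.\<close>

section \<open>Subtrees of a tree\<close>

definition induces_connected :: "'v set set \<Rightarrow> 'v set \<Rightarrow> bool" where
  "induces_connected T X \<longleftrightarrow> (\<forall>a\<in>X. \<forall>b\<in>X. (a, b) \<in> (graph_rel {t\<in>T. t \<subseteq> X})\<^sup>*)"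

lemma graph_rel_sym: "sym (graph_rel F)"
  unfolding graph_rel_def sym_def by (auto simp: insert_commute)

lemma graph_rel_rtrancl_sym: "(x, y) \<in> (graph_rel F)\<^sup>* \<Longrightarrow> (y, x) \<in> (graph_rel F)\<^sup>*"
  by (rule symD[OF sym_rtrancl[OF graph_rel_sym]])

lemma graph_rel_mono: "F \<subseteq> F' \<Longrightarrow> graph_rel F \<subseteq> graph_rel F'"
  unfolding graph_rel_def by auto

lemma is_graph_edges_within: "is_graph W F \<Longrightarrow> F' \<subseteq> F \<Longrightarrow> {f\<in>F'. f \<subseteq> W} = F'"
  unfolding is_graph_def by blast

lemma connected_graph_iff_induces_connected:
  "connected_graph X T \<longleftrightarrow> X \<noteq> {} \<and> induces_connected T X"
  unfolding connected_graph_def induces_connected_def by simp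

lemma tree_edge_is_bridge:
  assumes tree: "is_tree W T" and xy: "{x, y} \<in> T"
  shows "(x, y) \<notin> (graph_rel (T - {{x, y}}))\<^sup>*"
proof
  let ?R = "graph_rel (T - {{x, y}})"
  assume path: "(x, y) \<in> ?R\<^sup>*"
  have "graph_rel T \<subseteq> ?R\<^sup>*"
  proof
    fix p assume "p \<in> graph_rel T"
    then obtain a b where p: "p = (a, b)" "a \<noteq> b" "{a, b} \<in> T" by (auto simp: graph_rel_def)
    show "p \<in> ?R\<^sup>*"
    proof (cases "{a, b} = {x, y}")
      case True
      then show ?thesis
        using path graph_rel_rtrancl_sym[OF path] p(1) by (auto simp: doubleton_eq_iff)
    next
      case False
      then show ?thesis using p by (auto simp: graph_rel_def)
    qed
  qed
  then have "(graph_rel T)\<^sup>* \<subseteq> ?R\<^sup>*" by (rule rtrancl_subset_rtrancl)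
  moreover have "is_graph W T" "connected_graph W T" "\<not> connected_graph W (T - {{x, y}})"
    using tree xy unfolding is_tree_def by auto
  moreover from \<open>is_graph W T\<close> have "{f\<in>T. f \<subseteq> W} = T" "{f\<in>T - {{x, y}}. f \<subseteq> W} = T - {{x, y}}"
    using is_graph_edges_within[of W T T] is_graph_edges_within[of W T "T - {{x, y}}"] by auto
  ultimately show False
    unfolding connected_graph_def by (metis subsetD)
qed

lemma rtrancl_leaves_set:
  assumes "(a, b) \<in> R\<^sup>*" "a \<in> Z" "b \<notin> Z"
  obtains p q where "p \<in> Z" "q \<notin> Z" "(p, q) \<in> R" "(q, b) \<in> (R \<inter> (- Z) \<times> (- Z))\<^sup>*"
proof -
  have "b \<notin> Z \<longrightarrow> (\<exists>p q. p \<in> Z \<and> q \<notin> Z \<and> (p, q) \<in> R \<and> (q, b) \<in> (R \<inter> (- Z) \<times> (- Z))\<^sup>*)"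
    using assms(1)
  proof (induction rule: rtrancl_induct)
    case (step y b)
    show ?case
    proof (cases "y \<in> Z")
      case True
      then show ?thesis using step.hyps(2) by blast
    next
      case False
      then show ?thesis
        using step by (blast intro: rtrancl_into_rtrancl)
    qed
  qed (use assms(2) in simp)
  then show thesis using assms(3) that by blast
qed

text \<open>In a tree, the intersection of two subtrees is a subtree: a path inside \<open>X\<close> leaving the
  component of \<open>a\<close> in \<open>X \<inter> Y\<close> crosses an edge \<open>{p, q}\<close> with \<open>q \<notin> Y\<close>, and together with a path
  inside \<open>Y\<close> this closes a cycle through that edge.\<close>
lemma induces_connected_Int:
  assumes tree: "is_tree W T" and X: "induces_connected T X" and Y: "induces_connected T Y"
  shows "induces_connected T (X \<inter> Y)"
  unfolding induces_connected_def
proof (intro ballI, rule ccontr)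
  fix a b assume a: "a \<in> X \<inter> Y" and b: "b \<in> X \<inter> Y"
  let ?RXY = "graph_rel {t\<in>T. t \<subseteq> X \<inter> Y}"
  assume not_ab: "(a, b) \<notin> ?RXY\<^sup>*"
  define Z where "Z = {w. (a, w) \<in> ?RXY\<^sup>*}"
  have Z_sub: "Z \<subseteq> X \<inter> Y"
  proof
    fix w assume "w \<in> Z"
    then have "(a, w) \<in> ?RXY\<^sup>*" by (simp add: Z_def)
    then show "w \<in> X \<inter> Y" using a by (induction rule: rtrancl_induct) (auto simp: graph_rel_def)
  qed
  have "(a, b) \<in> (graph_rel {t\<in>T. t \<subseteq> X})\<^sup>*" using X a b by (simp add: induces_connected_def)
  moreover have "a \<in> Z" "b \<notin> Z" using not_ab by (simp_all add: Z_def)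
  ultimately obtain p q where pq: "p \<in> Z" "q \<notin> Z" "(p, q) \<in> graph_rel {t\<in>T. t \<subseteq> X}"
    and q_b: "(q, b) \<in> (graph_rel {t\<in>T. t \<subseteq> X} \<inter> (- Z) \<times> (- Z))\<^sup>*"
    by (rule rtrancl_leaves_set)
  have pq_T: "{p, q} \<in> T" using pq(3) by (simp add: graph_rel_def)
  have "q \<notin> Y"
  proof
    assume "q \<in> Y"
    then have "(p, q) \<in> ?RXY" using pq Z_sub by (auto simp: graph_rel_def)
    then have "q \<in> Z" using pq(1) by (auto simp: Z_def intro: rtrancl_into_rtrancl)
    then show False using pq(2) by simp
  qed
  let ?R = "graph_rel (T - {{p, q}})"
  have "graph_rel {t\<in>T. t \<subseteq> X} \<inter> (- Z) \<times> (- Z) \<subseteq> ?R"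
    using pq(1) by (auto simp: graph_rel_def doubleton_eq_iff)
  then have q_b': "(q, b) \<in> ?R\<^sup>*" using q_b rtrancl_mono by blast
  have "graph_rel {t\<in>T. t \<subseteq> Y} \<subseteq> ?R"
    using \<open>q \<notin> Y\<close> by (auto simp: graph_rel_def doubleton_eq_iff)
  moreover have "(b, a) \<in> (graph_rel {t\<in>T. t \<subseteq> Y})\<^sup>*"
    using Y a b by (simp add: induces_connected_def)
  ultimately have b_a: "(b, a) \<in> ?R\<^sup>*" using rtrancl_mono by blast
  have "?RXY \<subseteq> ?R"
    using \<open>q \<notin> Y\<close> by (auto simp: graph_rel_def doubleton_eq_iff)
  then have a_p: "(a, p) \<in> ?R\<^sup>*" using pq(1) rtrancl_mono unfolding Z_def by blast
  have "(q, p) \<in> ?R\<^sup>*" using q_b' b_a a_p by (meson rtrancl_trans)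
  then have "(p, q) \<in> ?R\<^sup>*" by (rule graph_rel_rtrancl_sym)
  with tree_edge_is_bridge[OF tree pq_T(1)] show False by contradiction
qed

lemma connected_family_Union_rtrancl:
  assumes S: "connected_family S" and conn: "\<And>Z. Z \<in> S \<Longrightarrow> induces_connected T Z"
    and a: "a \<in> \<Union>S" and b: "b \<in> \<Union>S"
  shows "(a, b) \<in> (\<Union>Z\<in>S. graph_rel {t\<in>T. t \<subseteq> Z})\<^sup>*"
proof -
  let ?RS = "\<Union>Z\<in>S. graph_rel {t\<in>T. t \<subseteq> Z}"
  have within: "(u, v) \<in> ?RS\<^sup>*" if "Z \<in> S" "u \<in> Z" "v \<in> Z" for Z u v
  proof -
    have "(u, v) \<in> (graph_rel {t\<in>T. t \<subseteq> Z})\<^sup>*"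
      using conn[OF that(1)] that by (simp add: induces_connected_def)
    moreover have "graph_rel {t\<in>T. t \<subseteq> Z} \<subseteq> ?RS" using that(1) by blast
    ultimately show ?thesis using rtrancl_mono by blast
  qed
  obtain X Y where XY: "X \<in> S" "Y \<in> S" "a \<in> X" "b \<in> Y" using a b by blast
  have "(X, Y) \<in> (graph_rel {f \<in> intersection_graph_edges S. f \<subseteq> S})\<^sup>*"
    using S XY unfolding connected_family_def connected_graph_def by blast
  then have "Y \<in> S \<and> (\<forall>v\<in>Y. (a, v) \<in> ?RS\<^sup>*)"
  proof (induction rule: rtrancl_induct)
    case base
    then show ?case using XY within by blast
  next
    case (step Y Y')
    then obtain z where z: "z \<in> Y" "z \<in> Y'" and "Y' \<in> S"
      by (auto simp: graph_rel_def intersection_graph_edges_def doubleton_eq_iff)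
    then show ?case using step.IH within by (blast intro: rtrancl_trans)
  qed
  then show ?thesis using XY by blast
qed
section \<open>Edges of \<open>Comp(H)\<close> span subtrees closed under \<open>I_H\<close>\<close>

definition closed_under_I_H :: "'a set \<Rightarrow> 'a set set \<Rightarrow> 'a set set \<Rightarrow> 'a set \<Rightarrow> bool" where
  "closed_under_I_H V E T X \<longleftrightarrow> (\<forall>t\<in>T. t \<subseteq> X \<longrightarrow> I_H V E t \<subseteq> X)"

lemma I_H_subset_edge: "e \<in> E \<Longrightarrow> t \<subseteq> e \<Longrightarrow> I_H V E t \<subseteq> e"
  unfolding I_H_def by auto

lemma I_H_subset_vertices: "hypergraph V E \<Longrightarrow> I_H V E t \<subseteq> V"
  unfolding I_H_def hypergraph_def by auto

lemma subset_I_H: "X \<subseteq> V \<Longrightarrow> (\<And>e. e \<in> E \<Longrightarrow> t \<subseteq> e \<Longrightarrow> X \<subseteq> e) \<Longrightarrow> X \<subseteq> I_H V E t"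
  unfolding I_H_def by auto

lemma comp_gen_nonempty_subset:
  assumes "hypergraph V E" "X \<in> comp_gen E"
  shows "X \<noteq> {} \<and> X \<subseteq> V"
  using assms(2)
proof (induction rule: comp_gen.induct)
  case (base e)
  then show ?case using assms(1) by (simp add: hypergraph_def)
next
  case (union S)
  then have "S \<noteq> {}" by (simp add: connected_family_def connected_graph_def)
  then show ?case using union.IH by blast
qed blast

lemma comp_gen_induces_connected:
  assumes host: "host_tree V E T" and X: "X \<in> comp_gen E"
  shows "induces_connected T X"
  using X
proof (induction rule: comp_gen.induct)
  case (base e)
  then show ?case using host by (simp add: host_tree_def connected_graph_def induces_connected_def)
next
  case (inter X Y)
  from host have "is_tree V T" by (simp add: host_tree_def)
  then show ?case using inter.IH by (rule induces_connected_Int)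
next
  case (union S)
  have "{t\<in>T. t \<subseteq> Z} \<subseteq> {t\<in>T. t \<subseteq> \<Union>S}" if "Z \<in> S" for Z
    using that by blast
  then have "(\<Union>Z\<in>S. graph_rel {t\<in>T. t \<subseteq> Z}) \<subseteq> graph_rel {t\<in>T. t \<subseteq> \<Union>S}"
    by (simp add: UN_least graph_rel_mono)
  then have "(\<Union>Z\<in>S. graph_rel {t\<in>T. t \<subseteq> Z})\<^sup>* \<subseteq> (graph_rel {t\<in>T. t \<subseteq> \<Union>S})\<^sup>*"
    by (rule rtrancl_mono)
  then show ?case
    using connected_family_Union_rtrancl[OF union.hyps(2) union.IH]
    unfolding induces_connected_def by blast
qed

lemma comp_gen_closed_under_I_H:
  assumes host: "host_tree V E T" and X: "X \<in> comp_gen E"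
  shows "closed_under_I_H V E T X"
  using X unfolding closed_under_I_H_def
proof (induction rule: comp_gen.induct)
  case (base e)
  then show ?case using I_H_subset_edge by metis
next
  case (inter X Y)
  show ?case
  proof (intro ballI impI)
    fix t assume "t \<in> T" "t \<subseteq> X \<inter> Y"
    then have "I_H V E t \<subseteq> X" "I_H V E t \<subseteq> Y" using inter.IH by simp_all
    then show "I_H V E t \<subseteq> X \<inter> Y" by simp
  qed
next
  case (union S)
  have tree: "is_tree V T" using host by (simp add: host_tree_def)
  show ?case
  proof (intro ballI impI)
    fix t assume t: "t \<in> T" "t \<subseteq> \<Union>S"
    show "I_H V E t \<subseteq> \<Union>S"
    proof (cases "\<exists>Z\<in>S. t \<subseteq> Z")
      case True
      then obtain Z where "Z \<in> S" "t \<subseteq> Z" by blast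
      then have "I_H V E t \<subseteq> Z" using union.IH t(1) by simp
      then show ?thesis using \<open>Z \<in> S\<close> by blast
    next
      case False
      have "card t = 2" using t(1) tree by (simp add: is_tree_def is_graph_def)
      then obtain x y where xy: "t = {x, y}" by (meson card_2_iff)
      have "\<And>Z. Z \<in> S \<Longrightarrow> induces_connected T Z"
        using union.hyps(1) comp_gen_induces_connected[OF host] by blast
      moreover have "x \<in> \<Union>S" "y \<in> \<Union>S" using t(2) xy by auto
      ultimately have walk: "(x, y) \<in> (\<Union>Z\<in>S. graph_rel {t\<in>T. t \<subseteq> Z})\<^sup>*"
        by (rule connected_family_Union_rtrancl[OF union.hyps(2)])
      have "{t'\<in>T. t' \<subseteq> Z} \<subseteq> T - {t}" if "Z \<in> S" for Z
        using False that by blast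
      then have "(\<Union>Z\<in>S. graph_rel {t\<in>T. t \<subseteq> Z}) \<subseteq> graph_rel (T - {t})"
        by (simp add: UN_least graph_rel_mono)
      with walk have "(x, y) \<in> (graph_rel (T - {t}))\<^sup>*"
        by (rule rtrancl_mono[THEN subsetD, rotated])
      with tree_edge_is_bridge[OF tree] t(1) have False unfolding xy by blast
      then show ?thesis ..
    qed
  qed
qed

lemma Comp_edge_is_closed_subtree:
  assumes hyp: "hypergraph V E" and host: "host_tree V E T" and B: "B \<in> Comp_edges V E"
  shows "B \<noteq> {} \<and> B \<subseteq> V \<and> induces_connected T B \<and> closed_under_I_H V E T B"
proof -
  consider "B = V" | v where "v \<in> V" "B = {v}" | "B \<in> comp_gen E"
    using B unfolding Comp_edges_def by blast
  then show ?thesis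
  proof cases
    case 1
    moreover have "connected_graph V T" using host by (simp add: host_tree_def is_tree_def)
    ultimately show ?thesis
      by (simp add: connected_graph_iff_induces_connected closed_under_I_H_def
          I_H_subset_vertices[OF hyp])
  next
    case (2 v)
    have "\<not> t \<subseteq> {v}" if "t \<in> T" for t
    proof
      assume "t \<subseteq> {v}"
      then have "card t \<le> 1" using card_mono[of "{v}" t] by simp
      moreover have "card t = 2" using that host by (simp add: host_tree_def is_tree_def is_graph_def)
      ultimately show False by simp
    qed
    then show ?thesis using 2 by (auto simp: induces_connected_def closed_under_I_H_def)
  next
    case 3
    then show ?thesis
      using comp_gen_nonempty_subset[OF hyp 3] comp_gen_induces_connected[OF host 3]
        comp_gen_closed_under_I_H[OF host 3] by blast
  qed
qed

section \<open>Components of the 2-section\<close>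

definition component_of :: "'a set \<Rightarrow> 'a set set \<Rightarrow> 'a \<Rightarrow> 'a set" where
  "component_of V F x = {y\<in>V. (x, y) \<in> (two_section_rel V F)\<^sup>*}"

lemma two_section_components_eq: "two_section_components V F = component_of V F ` V"
  by (simp add: two_section_components_def component_of_def)

lemma A_of_eq: "A_of V E B = {C \<in> component_of V (edges_not_containing E B) ` V. C \<inter> B \<noteq> {}}"
  by (simp add: A_of_def two_section_components_eq)

lemma component_of_self: "x \<in> V \<Longrightarrow> x \<in> component_of V F x"
  by (simp add: component_of_def)

lemma component_of_eqI:
  assumes "y \<in> component_of V F x"
  shows "component_of V F y = component_of V F x"
proof -
  have "sym (two_section_rel V F)" unfolding two_section_rel_def sym_def by blast
  then have "sym ((two_section_rel V F)\<^sup>*)" by (rule sym_rtrancl)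
  moreover have "(x, y) \<in> (two_section_rel V F)\<^sup>*" using assms by (simp add: component_of_def)
  ultimately show ?thesis
    unfolding component_of_def by (blast dest: symD intro: rtrancl_trans)
qed

lemma component_of_unique: "C \<in> component_of V F ` V \<Longrightarrow> x \<in> C \<Longrightarrow> C = component_of V F x"
  using component_of_eqI by fastforce

lemma component_of_step:
  "(x, y) \<in> two_section_rel V F \<Longrightarrow> component_of V F y = component_of V F x"
  by (rule component_of_eqI) (auto simp: component_of_def two_section_rel_def)

lemma two_section_rtrancl_lift:
  assumes host: "host_tree V E T" and F: "F \<subseteq> E"
    and uv: "(u, v) \<in> (two_section_rel V F)\<^sup>*"
  shows "(u, v) \<in> (graph_rel {t\<in>T. \<exists>f\<in>F. t \<subseteq> f})\<^sup>*"
  using uv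
proof (induction rule: rtrancl_induct)
  case (step w w')
  then obtain f where f: "f \<in> F" "w \<in> f" "w' \<in> f" by (auto simp: two_section_rel_def)
  then have "(w, w') \<in> (graph_rel {t\<in>T. t \<subseteq> f})\<^sup>*"
    using host F by (auto simp: host_tree_def connected_graph_def)
  moreover have "graph_rel {t\<in>T. t \<subseteq> f} \<subseteq> graph_rel {t\<in>T. \<exists>f\<in>F. t \<subseteq> f}"
    using f(1) by (intro graph_rel_mono) blast
  ultimately have "(w, w') \<in> (graph_rel {t\<in>T. \<exists>f\<in>F. t \<subseteq> f})\<^sup>*"
    by (rule rtrancl_mono[THEN subsetD, rotated])
  with step.IH show ?case by (rule rtrancl_trans)
qed simp

section \<open>The graph \<open>\<Gamma>\<close>\<close>

lemma not_subset_edge_not_containing: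
  "I_H V E t = B \<Longrightarrow> f \<in> edges_not_containing E B \<Longrightarrow> \<not> t \<subseteq> f"
  using I_H_subset_edge unfolding edges_not_containing_def by blast

lemma I_H_eq_if_not_subset_edges_not_containing:
  assumes "closed_under_I_H V E T B" "B \<subseteq> V" "t \<in> T" "t \<subseteq> B"
    and "\<And>f. f \<in> edges_not_containing E B \<Longrightarrow> \<not> t \<subseteq> f"
  shows "I_H V E t = B"
proof
  show "I_H V E t \<subseteq> B" using assms(1,3,4) by (simp add: closed_under_I_H_def)
  show "B \<subseteq> I_H V E t"
    using assms(2,5) by (intro subset_I_H) (auto simp: edges_not_containing_def)
qed

lemma component_of_in_A_of:
  assumes "b \<in> B" "B \<subseteq> V"
  shows "component_of V (edges_not_containing E B) b \<in> A_of V E B"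
proof -
  have "b \<in> V" using assms by blast
  then have "b \<in> component_of V (edges_not_containing E B) b" by (rule component_of_self)
  then show ?thesis using \<open>b \<in> V\<close> assms(1) unfolding A_of_eq by blast
qed

lemma A_of_eq_component_of:
  "C \<in> A_of V E B \<Longrightarrow> x \<in> C \<Longrightarrow> C = component_of V (edges_not_containing E B) x"
  by (simp add: A_of_eq component_of_unique)

lemma Gamma_edgesI:
  "A1 \<in> A_of V E B \<Longrightarrow> A2 \<in> A_of V E B \<Longrightarrow> A1 \<noteq> A2 \<Longrightarrow> {x, y} \<in> T \<Longrightarrow> I_H V E {x, y} = B
    \<Longrightarrow> x \<in> A1 \<Longrightarrow> y \<in> A2 \<Longrightarrow> {A1, A2} \<in> Gamma_edges V E B T"
  unfolding Gamma_edges_def by blast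

lemma is_graph_Gamma: "is_graph (A_of V E B) (Gamma_edges V E B T)"
  unfolding is_graph_def
proof
  fix g assume "g \<in> Gamma_edges V E B T"
  then obtain A1 A2 where "g = {A1, A2}" "A1 \<in> A_of V E B" "A2 \<in> A_of V E B" "A1 \<noteq> A2"
    unfolding Gamma_edges_def by blast
  then show "g \<subseteq> A_of V E B \<and> card g = 2" by simp
qed

lemma Gamma_edge_if_tree_edge_between_components:
  fixes V E T and B :: "'a set"
  defines "component \<equiv> component_of V (edges_not_containing E B)"
  assumes closed: "closed_under_I_H V E T B" and B: "B \<subseteq> V"
    and xy: "{x, y} \<in> T" "{x, y} \<subseteq> B" and ne: "component x \<noteq> component y"
  shows "{component x, component y} \<in> Gamma_edges V E B T"
proof (rule Gamma_edgesI)
  have "\<not> {x, y} \<subseteq> f" if "f \<in> edges_not_containing E B" for f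
  proof
    assume "{x, y} \<subseteq> f"
    then have "(x, y) \<in> two_section_rel V (edges_not_containing E B)"
      using that ne xy(2) B by (auto simp: two_section_rel_def)
    then have "component y = component x" unfolding component_def by (rule component_of_step)
    with ne show False by simp
  qed
  then show "I_H V E {x, y} = B"
    using I_H_eq_if_not_subset_edges_not_containing[OF closed B xy] by blast
  show "component x \<in> A_of V E B" "component y \<in> A_of V E B"
    using xy(2) B unfolding component_def by (simp_all add: component_of_in_A_of)
  show "x \<in> component x" "y \<in> component y"
    using xy(2) B unfolding component_def by (simp_all add: component_of_self subset_iff)
qed (use xy ne in simp_all)

lemma connected_graph_Gamma:
  assumes "B \<noteq> {}" "B \<subseteq> V" "induces_connected T B" "closed_under_I_H V E T B"
  shows "connected_graph (A_of V E B) (Gamma_edges V E B T)"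
  unfolding connected_graph_def
proof (intro conjI ballI)
  let ?component = "component_of V (edges_not_containing E B)"
  let ?G = "Gamma_edges V E B T"
  have walk: "(?component b, ?component b') \<in> (graph_rel ?G)\<^sup>*"
    if "(b, b') \<in> (graph_rel {t\<in>T. t \<subseteq> B})\<^sup>*" for b b'
    using that
  proof (induction rule: rtrancl_induct)
    case (step w w')
    then have "{w, w'} \<in> T" "{w, w'} \<subseteq> B" by (auto simp: graph_rel_def)
    then have "?component w = ?component w' \<or> (?component w, ?component w') \<in> graph_rel ?G"
      using Gamma_edge_if_tree_edge_between_components[OF assms(4,2)] by (auto simp: graph_rel_def)
    then show ?case
    proof
      assume "?component w = ?component w'"
      then show ?case using step.IH by simp
    next
      assume "(?component w, ?component w') \<in> graph_rel ?G"
      with step.IH show ?case by (rule rtrancl_into_rtrancl)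
    qed
  qed simp
  have "{f\<in>?G. f \<subseteq> A_of V E B} = ?G" using is_graph_Gamma[of V E B T] by (rule is_graph_edges_within) simp
  fix C C' assume C: "C \<in> A_of V E B" and C': "C' \<in> A_of V E B"
  then have "C \<inter> B \<noteq> {}" "C' \<inter> B \<noteq> {}" by (simp_all add: A_of_def)
  then obtain b b' where b: "b \<in> C" "b \<in> B" and b': "b' \<in> C'" "b' \<in> B" by blast
  have "C = ?component b" "C' = ?component b'"
    using C C' b(1) b'(1) by (simp_all add: A_of_eq_component_of)
  moreover have "(b, b') \<in> (graph_rel {t\<in>T. t \<subseteq> B})\<^sup>*"
    using assms(3) b b' by (simp add: induces_connected_def)
  ultimately show "(C, C') \<in> (graph_rel {f\<in>?G. f \<subseteq> A_of V E B})\<^sup>*"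
    using walk \<open>{f\<in>?G. f \<subseteq> A_of V E B} = ?G\<close> by simp
next
  obtain b where "b \<in> B" using assms(1) by blast
  then have "component_of V (edges_not_containing E B) b \<in> A_of V E B"
    using assms(2) by (rule component_of_in_A_of)
  then show "A_of V E B \<noteq> {}" by blast
qed

lemma graph_rel_Gamma_edgesD:
  assumes "(D, D') \<in> graph_rel (Gamma_edges V E B T)"
  obtains p q where "{p, q} \<in> T" "I_H V E {p, q} = B" "p \<in> D" "q \<in> D'"
    "D \<in> A_of V E B" "D' \<in> A_of V E B"
proof -
  from assms have "{D, D'} \<in> Gamma_edges V E B T" by (simp add: graph_rel_def)
  then obtain A1 A2 x y where A: "{D, D'} = {A1, A2}" "A1 \<in> A_of V E B" "A2 \<in> A_of V E B"
    and xy: "{x, y} \<in> T" "I_H V E {x, y} = B" "x \<in> A1" "y \<in> A2"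
    unfolding Gamma_edges_def by blast
  from A(1) consider "D = A1" "D' = A2" | "D = A2" "D' = A1" by (auto simp: doubleton_eq_iff)
  then show thesis
  proof cases
    case 1
    then show thesis using that[of x y] A xy by simp
  next
    case 2
    then show thesis using that[of y x] A xy by (simp add: insert_commute)
  qed
qed

lemma component_rtrancl_avoiding:
  assumes host: "host_tree V E T" and t: "I_H V E t = B"
    and v: "v \<in> component_of V (edges_not_containing E B) u"
  shows "(u, v) \<in> (graph_rel (T - {t}))\<^sup>*"
proof -
  have "edges_not_containing E B \<subseteq> E" by (auto simp: edges_not_containing_def)
  moreover have "(u, v) \<in> (two_section_rel V (edges_not_containing E B))\<^sup>*"
    using v by (simp add: component_of_def)
  ultimately have "(u, v) \<in> (graph_rel {t'\<in>T. \<exists>f\<in>edges_not_containing E B. t' \<subseteq> f})\<^sup>*"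
    by (rule two_section_rtrancl_lift[OF host])
  moreover have "{t'\<in>T. \<exists>f\<in>edges_not_containing E B. t' \<subseteq> f} \<subseteq> T - {t}"
    using not_subset_edge_not_containing[OF t] by blast
  ultimately show ?thesis
    by (rule rtrancl_mono[OF graph_rel_mono, THEN subsetD, rotated])
qed

lemma Gamma_walk_lift:
  fixes V E T and B :: "'a set"
  defines "component \<equiv> component_of V (edges_not_containing E B)"
  assumes host: "host_tree V E T" and xy: "{x, y} \<in> T" "I_H V E {x, y} = B"
    and walk: "(component x, D) \<in> (graph_rel (Gamma_edges V E B T - {{component x, component y}}))\<^sup>*"
    and v: "v \<in> D"
  shows "(x, v) \<in> (graph_rel (T - {{x, y}}))\<^sup>*"
  using walk v
proof (induction arbitrary: v rule: rtrancl_induct)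
  case base
  then show ?case unfolding component_def by (rule component_rtrancl_avoiding[OF host xy(2)])
next
  case (step D D')
  then have edge: "(D, D') \<in> graph_rel (Gamma_edges V E B T)" "{D, D'} \<noteq> {component x, component y}"
    by (auto simp: graph_rel_def)
  obtain p q where pq: "{p, q} \<in> T" "I_H V E {p, q} = B" "p \<in> D" "q \<in> D'"
    "D \<in> A_of V E B" "D' \<in> A_of V E B"
    by (rule graph_rel_Gamma_edgesD[OF edge(1)])
  have D: "D = component p" "D' = component q"
    unfolding component_def using pq by (simp_all add: A_of_eq_component_of)
  then have "{p, q} \<noteq> {x, y}" using edge(2) by (auto simp: doubleton_eq_iff)
  moreover have "p \<noteq> q" using edge(1) D by (auto simp: graph_rel_def)
  ultimately have "(p, q) \<in> graph_rel (T - {{x, y}})" using pq(1) by (simp add: graph_rel_def)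
  with step.IH[OF pq(3)] have "(x, q) \<in> (graph_rel (T - {{x, y}}))\<^sup>*"
    by (rule rtrancl_into_rtrancl)
  moreover have "(q, v) \<in> (graph_rel (T - {{x, y}}))\<^sup>*"
    using step.prems unfolding D component_def by (rule component_rtrancl_avoiding[OF host xy(2)])
  ultimately show ?case by (rule rtrancl_trans)
qed

lemma Gamma_edge_not_redundant:
  assumes host: "host_tree V E T" and g: "g \<in> Gamma_edges V E B T"
  shows "\<not> connected_graph (A_of V E B) (Gamma_edges V E B T - {g})"
proof
  let ?component = "component_of V (edges_not_containing E B)"
  obtain A1 A2 x y where gA: "g = {A1, A2}" "A1 \<in> A_of V E B" "A2 \<in> A_of V E B"
    and xy: "{x, y} \<in> T" "I_H V E {x, y} = B" "x \<in> A1" "y \<in> A2"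
    using g unfolding Gamma_edges_def by blast
  have A: "A1 = ?component x" "A2 = ?component y"
    using gA xy by (simp_all add: A_of_eq_component_of)
  assume "connected_graph (A_of V E B) (Gamma_edges V E B T - {g})"
  moreover have "{f\<in>Gamma_edges V E B T - {g}. f \<subseteq> A_of V E B} = Gamma_edges V E B T - {g}"
    using is_graph_Gamma[of V E B T] by (rule is_graph_edges_within) blast
  ultimately have "(A1, A2) \<in> (graph_rel (Gamma_edges V E B T - {g}))\<^sup>*"
    using gA(2,3) unfolding connected_graph_def by simp
  then have "(?component x, A2) \<in> (graph_rel (Gamma_edges V E B T - {{?component x, ?component y}}))\<^sup>*"
    using A gA(1) by simp
  then have "(x, y) \<in> (graph_rel (T - {{x, y}}))\<^sup>*"
    using xy(4) by (rule Gamma_walk_lift[OF host xy(1,2)])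
  moreover have "is_tree V T" using host by (simp add: host_tree_def)
  ultimately show False using xy(1) tree_edge_is_bridge by metis
qed

lemma is_tree_Gamma:
  assumes V: "finite V" and host: "host_tree V E T"
    and B: "B \<noteq> {}" "B \<subseteq> V" "induces_connected T B" "closed_under_I_H V E T B"
  shows "is_tree (A_of V E B) (Gamma_edges V E B T)"
  unfolding is_tree_def
proof (intro conjI ballI)
  have "A_of V E B \<subseteq> component_of V (edges_not_containing E B) ` V"
    by (auto simp: A_of_eq)
  then show "finite (A_of V E B)"
    by (rule finite_surj[OF V])
  show "is_graph (A_of V E B) (Gamma_edges V E B T)" by (rule is_graph_Gamma)
  show "connected_graph (A_of V E B) (Gamma_edges V E B T)"
    using B by (rule connected_graph_Gamma)
  show "\<not> connected_graph (A_of V E B) (Gamma_edges V E B T - {g})"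
    if "g \<in> Gamma_edges V E B T" for g
    using host that by (rule Gamma_edge_not_redundant)
qed

theorem mainTheorem15:
  fixes V :: "'a set" and E :: "'a set set" and T :: "'a set set" and B :: "'a set"
  assumes "hypertree V E"
    and "host_tree V E T"
    and "basic_set V E B"
  shows "is_tree (A_of V E B) (Gamma_edges V E B T)"
proof -
  have hyp: "hypergraph V E" using assms(1) by (simp add: hypertree_def)
  then have V: "finite V" by (simp add: hypergraph_def)
  have "B \<in> Comp_edges V E" using assms(3) by (simp add: basic_set_def)
  then have "B \<noteq> {} \<and> B \<subseteq> V \<and> induces_connected T B \<and> closed_under_I_H V E T B"
    by (rule Comp_edge_is_closed_subtree[OF hyp assms(2)])
  then show ?thesis using is_tree_Gamma[OF V assms(2)] by blast
qed

end
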